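(* For all integers $n\geq 8$ and $0\leq k\leq n/4$ there is a function $F_{n,k}$, defined on multisets of $n-k$ isomorphism classes of $(n-1)$-vertex graphs and taking real values, such that the following holds. For every graph $G$ on $n$ vertices with average degree $d^*$ and every choice of distinct vertices $v_1,\dots,v_{n-k}$ of $G$, the quantity $\widetilde d=F_{n,k}(\{G-v_1,\dots,G-v_{n-k}\})$ satisfies $0\leq \widetilde d-d^*<1$. (That is, from any deck of $G$ missing $k\le n/4$ cards one can reconstruct a quantity $\widetilde d$ with $0\le\widetilde d-d^*<1$.)
   Context: All graphs are finite, simple and undirected. For a graph $G$ and $v\in V(G)$, the card $G-v$ is the graph obtained by deleting $v$ and all edges incident to it. The average degree of an $n$-vertex graph with $m$ edges is $2m/n$. The multiset of cards is unlabelled, i.e. only the isomorphism classes of the cards are given. *)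

theory Defs
  imports Complex_Main "HOL-Library.Multiset"
begin

text \<open>A finite simple graph with vertices in nat: a pair (V, E) where E is a set of
  2-element subsets of V.\<close>
type_synonym graph = "nat set \<times> nat set set"

definition verts :: "graph \<Rightarrow> nat set" where "verts G = fst G"
definition edges :: "graph \<Rightarrow> nat set set" where "edges G = snd G"

definition wf_graph :: "graph \<Rightarrow> bool" where
  "wf_graph G \<longleftrightarrow> finite (verts G) \<and> (\<forall>e\<in>edges G. e \<subseteq> verts G \<and> card e = 2)"

definition graph_iso :: "graph \<Rightarrow> graph \<Rightarrow> bool" where
  "graph_iso G H \<longleftrightarrow> (\<exists>f. bij_betw f (verts G) (verts H) \<and>
     (\<forall>x\<in>verts G. \<forall>y\<in>verts G. {x, y} \<in> edges G \<longleftrightarrow> {f x, f y} \<in> edges H))"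

definition iso_class :: "graph \<Rightarrow> graph set" where
  "iso_class G = {H. wf_graph H \<and> graph_iso G H}"

definition card_del :: "graph \<Rightarrow> nat \<Rightarrow> graph" where
  "card_del G v = (verts G - {v}, {e \<in> edges G. v \<notin> e})"

definition avg_degree :: "graph \<Rightarrow> real" where
  "avg_degree G = 2 * real (card (edges G)) / real (card (verts G))"

end

theory Submission
  imports Defs
begin

text \<open>Every edge of \<open>G\<close> survives in exactly the cards of the vertices it avoids, so the
  edge counts of the \<open>n - k\<close> available cards add up to \<open>(n - k - 2) |E| + D\<close>, where
  \<open>D \<ge> 0\<close> is the degree sum of the \<open>k\<close> vertices whose cards are missing. Dividing by
  \<open>n - k - 2\<close> overestimates \<open>|E|\<close> by \<open>D / (n - k - 2) \<le> k (n - 1) / (n - k - 2)\<close>, and for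
  \<open>k \<le> n/4\<close> this error, scaled to average degree by \<open>2/n\<close>, stays below 1.\<close>

lemma wf_graph_finite_verts: "wf_graph G \<Longrightarrow> finite (verts G)"
  unfolding wf_graph_def by blast

lemma wf_graph_finite_edges: "wf_graph G \<Longrightarrow> finite (edges G)"
  unfolding wf_graph_def by (meson Pow_iff finite_Pow_iff finite_subset subsetI)

lemma wf_graph_edgeE:
  assumes "wf_graph G" "e \<in> edges G"
  obtains x y where "e = {x, y}" "x \<noteq> y" "x \<in> verts G" "y \<in> verts G"
proof -
  have "e \<subseteq> verts G" "card e = 2" using assms unfolding wf_graph_def by auto
  then show ?thesis using that by (metis card_2_iff insert_subset)
qed

lemma wf_graph_card_del: "wf_graph G \<Longrightarrow> wf_graph (card_del G v)"
  unfolding wf_graph_def card_del_def verts_def edges_def by auto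

lemma graph_iso_refl: "graph_iso G G"
  unfolding graph_iso_def by (intro exI[of _ id]) auto

lemma graph_iso_card_edges:
  assumes wG: "wf_graph G" and wH: "wf_graph H" and "graph_iso G H"
  shows "card (edges G) = card (edges H)"
proof -
  obtain f where bij: "bij_betw f (verts G) (verts H)" and
    adj: "\<forall>x\<in>verts G. \<forall>y\<in>verts G. {x, y} \<in> edges G \<longleftrightarrow> {f x, f y} \<in> edges H"
    using \<open>graph_iso G H\<close> unfolding graph_iso_def by blast
  have inj: "inj_on f (verts G)" using bij bij_betw_def by blast
  have "bij_betw (image f) (edges G) (edges H)"
  proof (rule bij_betw_imageI)
    show "inj_on (image f) (edges G)"
      using inj wG unfolding wf_graph_def by (metis inj_onI inj_on_image_eq_iff)
    show "image f ` edges G = edges H"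
    proof
      show "image f ` edges G \<subseteq> edges H"
      proof
        fix t assume "t \<in> image f ` edges G"
        then obtain a where a: "a \<in> edges G" and t: "t = f ` a" by blast
        obtain x y where "a = {x, y}" "x \<in> verts G" "y \<in> verts G"
          using a by (rule wf_graph_edgeE[OF wG])
        then show "t \<in> edges H" using adj a t by auto
      qed
      show "edges H \<subseteq> image f ` edges G"
      proof
        fix t assume t: "t \<in> edges H"
        then obtain p q where pq: "t = {p, q}" "p \<in> verts H" "q \<in> verts H"
          by (rule wf_graph_edgeE[OF wH])
        then obtain x y where xy: "x \<in> verts G" "y \<in> verts G" "p = f x" "q = f y"
          using bij by (metis bij_betw_imp_surj_on imageE)
        then have "{x, y} \<in> edges G" using adj t pq by auto
        moreover have "t = f ` {x, y}" using pq xy by auto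
        ultimately show "t \<in> image f ` edges G" by blast
      qed
    qed
  qed
  then show ?thesis by (rule bij_betw_same_card)
qed

text \<open>An isomorphism class is only given as a set, so its edge count is read off an
  arbitrary member.\<close>
definition class_edge_count :: "graph set \<Rightarrow> nat" where
  "class_edge_count C = card (edges (SOME H. H \<in> C))"

lemma class_edge_count_iso_class:
  assumes "wf_graph G"
  shows "class_edge_count (iso_class G) = card (edges G)"
proof -
  have "G \<in> iso_class G" using assms graph_iso_refl unfolding iso_class_def by auto
  then have "(SOME H. H \<in> iso_class G) \<in> iso_class G" by (rule someI)
  then have "wf_graph (SOME H. H \<in> iso_class G)" "graph_iso G (SOME H. H \<in> iso_class G)"
    unfolding iso_class_def by auto
  then show ?thesis
    unfolding class_edge_count_def using graph_iso_card_edges assms by metis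
qed

definition degree :: "graph \<Rightarrow> nat \<Rightarrow> nat" where
  "degree G v = card {e \<in> edges G. v \<in> e}"

lemma card_edges_card_del:
  assumes "wf_graph G"
  shows "card (edges (card_del G v)) + degree G v = card (edges G)"
proof -
  have "edges G = {e \<in> edges G. v \<notin> e} \<union> {e \<in> edges G. v \<in> e}" by blast
  then have "card (edges G) = card {e \<in> edges G. v \<notin> e} + card {e \<in> edges G. v \<in> e}"
    using wf_graph_finite_edges[OF assms] by (metis (no_types, lifting) card_Un_disjoint
      disjoint_iff finite_Un mem_Collect_eq)
  then show ?thesis unfolding degree_def card_del_def edges_def by simp
qed

lemma sum_degree:
  assumes "wf_graph G"
  shows "(\<Sum>v\<in>verts G. degree G v) = 2 * card (edges G)"
proof -
  have "(\<Sum>v\<in>verts G. degree G v) = (\<Sum>v\<in>verts G. \<Sum>e\<in>{e \<in> edges G. v \<in> e}. 1)"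
    unfolding degree_def by simp
  also have "\<dots> = (\<Sum>e\<in>edges G. \<Sum>v\<in>{v \<in> verts G. v \<in> e}. 1)"
    using assms wf_graph_finite_verts wf_graph_finite_edges by (intro sum.swap_restrict)
  also have "\<dots> = (\<Sum>e\<in>edges G. 2)"
  proof (rule sum.cong)
    fix e assume "e \<in> edges G"
    then have "{v \<in> verts G. v \<in> e} = e" "card e = 2"
      using assms unfolding wf_graph_def by auto
    then show "(\<Sum>v\<in>{v \<in> verts G. v \<in> e}. 1) = (2::nat)" by simp
  qed simp
  finally show ?thesis by simp
qed

lemma degree_le:
  assumes wG: "wf_graph G" and "v \<in> verts G"
  shows "degree G v \<le> card (verts G) - 1"
proof -
  have "{e \<in> edges G. v \<in> e} \<subseteq> (\<lambda>w. {v, w}) ` (verts G - {v})"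
    by (auto elim!: wf_graph_edgeE[OF wG])
  then have "degree G v \<le> card ((\<lambda>w. {v, w}) ` (verts G - {v}))"
    unfolding degree_def using wf_graph_finite_verts[OF wG] by (simp add: card_mono)
  also have "\<dots> \<le> card (verts G - {v})" by (rule card_image_le) (simp add: wf_graph_finite_verts[OF wG])
  also have "\<dots> = card (verts G) - 1" using \<open>v \<in> verts G\<close> by simp
  finally show ?thesis .
qed

lemma sum_degree_le:
  assumes "wf_graph G" "S \<subseteq> verts G"
  shows "(\<Sum>v\<in>S. degree G v) \<le> card S * (card (verts G) - 1)"
proof -
  have "\<And>v. v \<in> S \<Longrightarrow> degree G v \<le> card (verts G) - 1"
    using assms degree_le by blast
  then show ?thesis using sum_bounded_above[of S "degree G"] by simp
qed

lemma sum_card_edges_card_del: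
  assumes wG: "wf_graph G" and S: "S \<subseteq> verts G"
  shows "(\<Sum>v\<in>S. card (edges (card_del G v))) + 2 * card (edges G)
       = card S * card (edges G) + (\<Sum>v\<in>verts G - S. degree G v)"
proof -
  have "(\<Sum>v\<in>S. card (edges (card_del G v))) + (\<Sum>v\<in>S. degree G v) = card S * card (edges G)"
    using card_edges_card_del[OF wG] by (simp flip: sum.distrib)
  moreover have "(\<Sum>v\<in>S. degree G v) + (\<Sum>v\<in>verts G - S. degree G v) = 2 * card (edges G)"
    using sum.subset_diff[OF S wf_graph_finite_verts[OF wG], of "degree G"] sum_degree[OF wG]
    by linarith
  ultimately show ?thesis by linarith
qed

lemma sum_class_edge_count_deck:
  assumes "wf_graph G" "distinct vs"
  shows "(\<Sum>C\<in>#mset (map (\<lambda>v. iso_class (card_del G v)) vs). class_edge_count C)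
       = (\<Sum>v\<in>set vs. card (edges (card_del G v)))"
proof -
  have "(\<Sum>C\<in>#mset (map (\<lambda>v. iso_class (card_del G v)) vs). class_edge_count C)
      = (\<Sum>v\<in>set vs. class_edge_count (iso_class (card_del G v)))"
    using \<open>distinct vs\<close> by (simp add: sum_unfold_sum_mset mset_set_set image_mset.compositionality o_def)
  then show ?thesis using assms by (simp add: class_edge_count_iso_class wf_graph_card_del)
qed

definition deck_degree_estimate :: "nat \<Rightarrow> nat \<Rightarrow> graph set multiset \<Rightarrow> real" where
  "deck_degree_estimate n k M =
     2 * real (\<Sum>C\<in>#M. class_edge_count C) / (real n * (real n - real k - 2))"

lemma deck_degree_estimate_error:
  assumes wG: "wf_graph G" and V: "card (verts G) = n" and "distinct vs"
    and len: "length vs = n - k" and sub: "set vs \<subseteq> verts G" and "k + 2 < n"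
  shows "deck_degree_estimate n k (mset (map (\<lambda>v. iso_class (card_del G v)) vs)) - avg_degree G
       = 2 * real (\<Sum>v\<in>verts G - set vs. degree G v) / (real n * (real n - real k - 2))"
proof -
  define E where "E = real (card (edges G))"
  define D where "D = real (\<Sum>v\<in>verts G - set vs. degree G v)"
  have "card (set vs) = n - k" using \<open>distinct vs\<close> len by (simp add: distinct_card)
  then have "real (\<Sum>v\<in>set vs. card (edges (card_del G v))) + 2 * E = (real n - real k) * E + D"
    using sum_card_edges_card_del[OF wG sub] \<open>k + 2 < n\<close> unfolding E_def D_def
    by (metis (mono_tags, lifting) less_imp_le_nat of_nat_add of_nat_diff of_nat_mult
        add_lessD1 of_nat_numeral)
  moreover have "real n - real k - 2 \<noteq> 0" "real n \<noteq> 0" using \<open>k + 2 < n\<close> by auto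
  ultimately show ?thesis
    unfolding deck_degree_estimate_def avg_degree_def sum_class_edge_count_deck[OF wG \<open>distinct vs\<close>]
      V E_def[symmetric] D_def[symmetric]
    by (simp add: divide_simps) (simp add: algebra_simps)
qed

lemma estimate_error_lt_1:
  fixes n k D :: real
  assumes "7 \<le> n" "k \<le> n / 4" "0 \<le> k" "D \<le> k * (n - 1)"
  shows "2 * D / (n * (n - k - 2)) < 1"
proof -
  have "k * (n - 1) \<le> n / 4 * (n - 1)" using assms by (intro mult_right_mono) auto
  then have "2 * D \<le> 2 * (n / 4) * (n - 1)" using assms by linarith
  also have "\<dots> < n * (n - n / 4 - 2)"
  proof -
    have "0 < n * (n / 4 - 3 / 2)" using \<open>7 \<le> n\<close> by simp
    moreover have "n * (n - n / 4 - 2) - 2 * (n / 4) * (n - 1) = n * (n / 4 - 3 / 2)"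
      by (simp add: field_simps)
    ultimately show ?thesis by linarith
  qed
  also have "\<dots> \<le> n * (n - k - 2)" using assms by (intro mult_left_mono) auto
  finally show ?thesis using assms by (simp add: divide_simps)
qed

theorem lemma2p2:
  fixes n k :: nat
  assumes "n \<ge> 8" and "real k \<le> real n / 4"
  shows "\<exists>F :: graph set multiset \<Rightarrow> real.
    \<forall>G vs. wf_graph G \<and> card (verts G) = n \<and> distinct vs \<and> length vs = n - k
             \<and> set vs \<subseteq> verts G \<longrightarrow>
      (let d = F (mset (map (\<lambda>v. iso_class (card_del G v)) vs))
       in 0 \<le> d - avg_degree G \<and> d - avg_degree G < 1)"
proof (intro exI allI impI)
  fix G vs
  assume "wf_graph G \<and> card (verts G) = n \<and> distinct vs \<and> length vs = n - k \<and> set vs \<subseteq> verts G"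
  then have wG: "wf_graph G" and V: "card (verts G) = n" and "distinct vs"
    and len: "length vs = n - k" and sub: "set vs \<subseteq> verts G" by auto
  define D where "D = (\<Sum>v\<in>verts G - set vs. degree G v)"
  have "k + 2 < n" using assms by linarith
  have "card (verts G - set vs) = k"
    using \<open>distinct vs\<close> len sub V \<open>k + 2 < n\<close>
    by (simp add: card_Diff_subset distinct_card finite_subset wf_graph_finite_verts[OF wG])
  then have "D \<le> k * (n - 1)" unfolding D_def using sum_degree_le[OF wG] V by fastforce
  then have "real D \<le> real k * real (n - 1)" by (simp flip: of_nat_mult)
  then have "real D \<le> real k * (real n - 1)" using \<open>k + 2 < n\<close> by (simp add: of_nat_diff)
  then have "2 * real D / (real n * (real n - real k - 2)) < 1"
    using assms by (intro estimate_error_lt_1) auto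
  moreover have "0 \<le> 2 * real D / (real n * (real n - real k - 2))"
    using \<open>k + 2 < n\<close> by simp
  ultimately show "let d = deck_degree_estimate n k (mset (map (\<lambda>v. iso_class (card_del G v)) vs))
       in 0 \<le> d - avg_degree G \<and> d - avg_degree G < 1"
    using deck_degree_estimate_error[OF wG V \<open>distinct vs\<close> len sub \<open>k + 2 < n\<close>]
    unfolding D_def Let_def by simp
qed

end
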